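(* Let $G$ be a graph with $\mathrm{pw}(G)=3$, and let $C^1,\ldots,C^c$ be pairwise vertex-disjoint chunk graphs, each a union of connected components of $G$, with $G=C^1\cup\cdots\cup C^c$. For each $i$ let $\mathcal{Q}_i$ be a path decomposition of $C^i$ of width at most $3$, and let $a$ and $b$ be the numbers of path decompositions among $\mathcal{Q}_1,\ldots,\mathcal{Q}_c$ of Type A and of Type B, respectively. Then $$\min_{\pi,\ \mathbf{f}\in\{0,1\}^c}\mathrm{length}\bigl(\mathcal{Q}^{f_1}_{\pi(1)}\oplus\cdots\oplus\mathcal{Q}^{f_c}_{\pi(c)}\bigr)=\sum_{i=1}^c\mathrm{length}(\mathcal{Q}_i)-\mu(a,b),$$ where the minimum is over all permutations $\pi$ of $\{1,\ldots,c\}$ and vectors $\mathbf{f}=(f_1,\ldots,f_c)\in\{0,1\}^c$, $\mathcal{Q}_i^0=\mathcal{Q}_i$, $\mathcal{Q}_i^1$ is the reverse of $\mathcal{Q}_i$, and $\mu(a,b)=\max(0,a-1)$ if $b=0$ and $\mu(a,b)=a+\lfloor b/2\rfloor$ if $b>0$.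
   Context: A path decomposition of $G$ is a sequence $(X_1,\ldots,X_l)$ of subsets of $V(G)$ covering $V(G)$, such that every edge lies in some $X_i$, and $X_i\cap X_k\subseteq X_j$ whenever $i\leq j\leq k$; width is $\max_i|X_i|-1$, length is $l$; $\mathrm{pw}(G)$ is the minimum width. A component is big if it has at least $3$ vertices; a chunk graph has exactly one big component. A path decomposition $(X_1,\ldots,X_l)$ of a chunk graph is of Type A if $|X_1|\leq 2$ and $|X_l|\leq 2$; Type B if exactly one of $|X_1|\leq 2$, $|X_l|\leq 2$ holds; (Type C if $|X_1|>2$ and $|X_l|>2$). The reverse of $(X_1,\ldots,X_l)$ is $(X_l,\ldots,X_1)$. For path decompositions $\mathcal{P}_1=(X^1_1,\ldots,X^1_{l_1})$, $\mathcal{P}_2=(X^2_1,\ldots,X^2_{l_2})$ of vertex-disjoint graphs, $\mathcal{P}_1\oplus\mathcal{P}_2=(X^1_1,\ldots,X^1_{l_1-1},X^1_{l_1}\cup X^2_1,X^2_2,\ldots,X^2_{l_2})$ if $|X^1_{l_1}|\leq 2$ and $|X^2_1|\leq 2$, and $(X^1_1,\ldots,X^1_{l_1},X^2_1,\ldots,X^2_{l_2})$ otherwise; multiple concatenations are evaluated left to right: $\mathcal{P}_1\oplus\cdots\oplus\mathcal{P}_c=(\cdots((\mathcal{P}_1\oplus\mathcal{P}_2)\oplus\mathcal{P}_3)\cdots)\oplus\mathcal{P}_c$. *)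

theory Defs
  imports "HOL-Combinatorics.Permutations"
begin

definition graph :: "'a set \<Rightarrow> 'a set set \<Rightarrow> bool" where
  "graph V E \<longleftrightarrow> finite V \<and> (\<forall>e\<in>E. e \<subseteq> V \<and> card e = 2)"

definition adj :: "'a set set \<Rightarrow> 'a \<Rightarrow> 'a \<Rightarrow> bool" where
  "adj E x y \<longleftrightarrow> {x, y} \<in> E"

definition reach :: "'a set \<Rightarrow> 'a set set \<Rightarrow> 'a \<Rightarrow> 'a \<Rightarrow> bool" where
  "reach V E x y \<longleftrightarrow> x \<in> V \<and> (\<lambda>u v. u \<in> V \<and> v \<in> V \<and> adj E u v)\<^sup>*\<^sup>* x y"

definition is_component :: "'a set \<Rightarrow> 'a set set \<Rightarrow> 'a set \<Rightarrow> bool" where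
  "is_component V E S \<longleftrightarrow> (\<exists>x\<in>V. S = {y. reach V E x y})"

definition big_component :: "'a set \<Rightarrow> 'a set set \<Rightarrow> 'a set \<Rightarrow> bool" where
  "big_component V E S \<longleftrightarrow> is_component V E S \<and> card S \<ge> 3"

definition chunk_graph :: "'a set \<Rightarrow> 'a set set \<Rightarrow> bool" where
  "chunk_graph V E \<longleftrightarrow> (\<exists>!S. big_component V E S)"

definition is_path_decomp :: "'a set \<Rightarrow> 'a set set \<Rightarrow> 'a set list \<Rightarrow> bool" where
  "is_path_decomp V E Xs \<longleftrightarrow>
     (\<forall>X\<in>set Xs. X \<subseteq> V) \<and> \<Union>(set Xs) = V \<and>
     (\<forall>e\<in>E. \<exists>X\<in>set Xs. e \<subseteq> X) \<and>
     (\<forall>i j k. i \<le> j \<and> j \<le> k \<and> k < length Xs \<longrightarrow> Xs ! i \<inter> Xs ! k \<subseteq> Xs ! j)"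

definition pd_width :: "'a set list \<Rightarrow> nat" where
  "pd_width Xs = Max (card ` set Xs) - 1"

definition pathwidth :: "'a set \<Rightarrow> 'a set set \<Rightarrow> nat" where
  "pathwidth V E = (LEAST w. \<exists>Xs. is_path_decomp V E Xs \<and> pd_width Xs = w)"

definition typeA :: "'a set list \<Rightarrow> bool" where
  "typeA Xs \<longleftrightarrow> card (hd Xs) \<le> 2 \<and> card (last Xs) \<le> 2"

definition typeB :: "'a set list \<Rightarrow> bool" where
  "typeB Xs \<longleftrightarrow> (card (hd Xs) \<le> 2) \<noteq> (card (last Xs) \<le> 2)"

definition oplus :: "'a set list \<Rightarrow> 'a set list \<Rightarrow> 'a set list" where
  "oplus P1 P2 = (if card (last P1) \<le> 2 \<and> card (hd P2) \<le> 2
      then butlast P1 @ [last P1 \<union> hd P2] @ tl P2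
      else P1 @ P2)"

fun concat_pds :: "'a set list list \<Rightarrow> 'a set list" where
  "concat_pds [] = []"
| "concat_pds (P # Ps) = foldl oplus P Ps"

definition orient :: "bool \<Rightarrow> 'a set list \<Rightarrow> 'a set list" where
  "orient f P = (if f then rev P else P)"

definition mu :: "nat \<Rightarrow> nat \<Rightarrow> nat" where
  "mu a b = (if b = 0 then a - 1 else a + b div 2)"

end

theory Submission
  imports Defs
begin

text \<open>Concatenating decompositions with \<open>\<oplus>\<close> loses exactly one bag at every junction where a
  small last bag (at most two vertices) meets a small first bag, so minimising the length means
  maximising the number of such merges. Every piece has at least three vertices, hence is never a
  single small bag, and merging does not change the outer end bags. A junction consumes one small
  end from each side, so the merges are at most half the number of small ends, \<open>a + b/2\<close>; without
  Type B pieces the small ends come in pairs on the Type A pieces and a chain of \<open>a\<close> such pieces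
  has only \<open>a - 1\<close> junctions. Both bounds are attained: one Type B piece ending small, all Type A
  pieces, then the remaining Type B pieces with alternating orientation, then the rest.\<close>

definition small_hd :: "'a set list \<Rightarrow> bool" where
  "small_hd P \<longleftrightarrow> card (hd P) \<le> 2"

definition small_last :: "'a set list \<Rightarrow> bool" where
  "small_last P \<longleftrightarrow> card (last P) \<le> 2"

definition nondegenerate_pd :: "'a set list \<Rightarrow> bool" where
  "nondegenerate_pd P \<longleftrightarrow> P \<noteq> [] \<and> (length P = 1 \<longrightarrow> \<not> small_hd P)"

text \<open>\<open>merge_count e Ps\<close> is the number of junctions that merge when \<open>Ps\<close> is appended to a
  decomposition whose last bag is small iff \<open>e\<close>.\<close>

fun merge_count :: "bool \<Rightarrow> 'a set list list \<Rightarrow> nat" where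
  "merge_count e [] = 0"
| "merge_count e (P # Ps) = of_bool (e \<and> small_hd P) + merge_count (small_last P) Ps"

definition ends_small_after :: "bool \<Rightarrow> 'a set list list \<Rightarrow> bool" where
  "ends_small_after e Ps = (if Ps = [] then e else small_last (last Ps))"

lemma typeA_iff: "typeA P \<longleftrightarrow> small_hd P \<and> small_last P"
  by (simp add: typeA_def small_hd_def small_last_def)

lemma typeB_iff: "typeB P \<longleftrightarrow> small_hd P \<noteq> small_last P"
  by (simp add: typeB_def small_hd_def small_last_def)

subsection \<open>Length of a concatenation\<close>

lemma
  assumes "P \<noteq> []" "nondegenerate_pd Q"
  shows oplus_nonempty: "oplus P Q \<noteq> []"
    and last_oplus: "last (oplus P Q) = last Q"
    and length_oplus:
      "length (oplus P Q) + of_bool (small_last P \<and> small_hd Q) = length P + length Q"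
proof -
  have "Q \<noteq> []" and "small_hd Q \<Longrightarrow> tl Q \<noteq> []"
    using assms(2) by (auto simp: nondegenerate_pd_def neq_Nil_conv)
  then show "oplus P Q \<noteq> []" "last (oplus P Q) = last Q"
      "length (oplus P Q) + of_bool (small_last P \<and> small_hd Q) = length P + length Q"
    using assms(1) by (auto simp: oplus_def small_last_def small_hd_def last_tl)
qed

lemma length_foldl_oplus:
  assumes "P \<noteq> []" "\<forall>Q\<in>set Qs. nondegenerate_pd Q"
  shows "length (foldl oplus P Qs) + merge_count (small_last P) Qs
         = length P + sum_list (map length Qs)"
  using assms
proof (induction Qs arbitrary: P)
  case (Cons Q Qs)
  then have Q: "nondegenerate_pd Q" by simp
  with Cons.prems have "oplus P Q \<noteq> []" "small_last (oplus P Q) = small_last Q"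
    by (simp_all add: oplus_nonempty last_oplus small_last_def)
  with Cons show ?case using length_oplus[OF Cons.prems(1) Q] Cons.IH[of "oplus P Q"] by simp
qed simp

lemma length_concat_pds:
  assumes "\<forall>P\<in>set Ps. nondegenerate_pd P"
  shows "length (concat_pds Ps) + merge_count False Ps = sum_list (map length Ps)"
proof (cases Ps)
  case (Cons P Qs)
  with assms have "P \<noteq> []" by (simp add: nondegenerate_pd_def)
  with Cons assms show ?thesis using length_foldl_oplus[of P Qs] by simp
qed simp

subsection \<open>Upper bound on the number of merges\<close>

lemma merge_count_append:
  "merge_count e (Ps @ Qs) = merge_count e Ps + merge_count (ends_small_after e Ps) Qs"
  by (induction Ps arbitrary: e) (auto simp: ends_small_after_def)

lemma double_merge_count_le:
  "2 * merge_count e Ps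
   \<le> of_bool e + 2 * length (filter typeA Ps) + length (filter typeB Ps)"
proof (induction Ps arbitrary: e)
  case (Cons P Ps)
  show ?case
    using Cons.IH[of "small_last P"]
    by (cases e; cases "small_hd P"; cases "small_last P") (auto simp: typeA_iff typeB_iff)
qed simp

lemma merge_count_le_without_typeB:
  assumes "\<forall>P\<in>set Ps. \<not> typeB P"
  shows "merge_count e Ps \<le> of_bool e + length (filter typeA Ps) - 1"
  using assms
proof (induction Ps arbitrary: e)
  case (Cons P Ps)
  then have "small_hd P = small_last P" by (simp add: typeB_iff)
  then have "typeA P \<longleftrightarrow> small_last P" by (simp add: typeA_iff)
  with Cons show ?case
    using Cons.IH[of "small_last P"] \<open>small_hd P = small_last P\<close> by (cases e; cases "small_last P") auto
qed simp

lemma merge_count_le_mu: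
  "merge_count False Ps \<le> mu (length (filter typeA Ps)) (length (filter typeB Ps))"
proof (cases "length (filter typeB Ps) = 0")
  case True
  then have "\<forall>P\<in>set Ps. \<not> typeB P" by (simp add: filter_empty_conv)
  with True show ?thesis using merge_count_le_without_typeB[of Ps False] by (simp add: mu_def)
next
  case False
  then show ?thesis using double_merge_count_le[of False Ps] by (simp add: mu_def)
qed

lemma small_hd_orient: "P \<noteq> [] \<Longrightarrow> small_hd (orient f P) = (if f then small_last P else small_hd P)"
  by (simp add: orient_def small_hd_def small_last_def hd_rev)

lemma small_last_orient:
  "P \<noteq> [] \<Longrightarrow> small_last (orient f P) = (if f then small_hd P else small_last P)"
  by (simp add: orient_def small_hd_def small_last_def last_rev)

lemma length_orient [simp]: "length (orient f P) = length P"
  by (simp add: orient_def)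

lemma typeA_orient: "P \<noteq> [] \<Longrightarrow> typeA (orient f P) = typeA P"
  by (auto simp: typeA_iff small_hd_orient small_last_orient)

lemma typeB_orient: "P \<noteq> [] \<Longrightarrow> typeB (orient f P) = typeB P"
  by (auto simp: typeB_iff small_hd_orient small_last_orient)

lemma nondegenerate_pd_orient: "nondegenerate_pd P \<Longrightarrow> nondegenerate_pd (orient f P)"
  by (auto simp: nondegenerate_pd_def orient_def length_Suc_conv)

lemma sum_list_arrangement:
  assumes "\<pi> permutes {0..<c}" "\<And>i fl. i < c \<Longrightarrow> g (orient fl (Q i)) = g (Q i)"
  shows "sum_list (map g (map (\<lambda>j. orient (f ! j) (Q (\<pi> j))) [0..<c])) = (\<Sum>i<c. g (Q i))"
proof -
  have "\<And>j. j < c \<Longrightarrow> \<pi> j < c"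
    using permutes_in_image[OF assms(1)] by auto
  then have "sum_list (map g (map (\<lambda>j. orient (f ! j) (Q (\<pi> j))) [0..<c]))
      = (\<Sum>j\<in>{0..<c}. g (Q (\<pi> j)))"
    using assms(2) by (simp add: interv_sum_list_conv_sum_set_nat)
  also have "\<dots> = (\<Sum>i<c. g (Q i))"
    using sum.permute[OF assms(1), of "\<lambda>i. g (Q i)"] by (simp add: comp_def atLeast0LessThan)
  finally show ?thesis .
qed

lemma length_filter_arrangement:
  assumes "\<pi> permutes {0..<c}" "\<And>i fl. i < c \<Longrightarrow> T (orient fl (Q i)) = T (Q i)"
  shows "length (filter T (map (\<lambda>j. orient (f ! j) (Q (\<pi> j))) [0..<c]))
         = card {i. i < c \<and> T (Q i)}"
proof -
  have "length (filter T xs) = sum_list (map (\<lambda>P. of_bool (T P)) xs)" for xs :: "'a set list list"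
    by (induction xs) auto
  moreover have "sum_list (map (\<lambda>P. of_bool (T P)) (map (\<lambda>j. orient (f ! j) (Q (\<pi> j))) [0..<c]))
      = (\<Sum>i<c. of_bool (T (Q i)) :: nat)"
    by (rule sum_list_arrangement[OF assms(1)]) (simp add: assms(2))
  moreover have "(\<Sum>i<c. of_bool (T (Q i)) :: nat) = card {i. i < c \<and> T (Q i)}"
    by (simp add: Int_def)
  ultimately show ?thesis by presburger
qed

lemma merge_count_arrangement_le:
  assumes "\<pi> permutes {0..<c}" "\<forall>i<c. Q i \<noteq> []"
  shows "merge_count False (map (\<lambda>j. orient (f ! j) (Q (\<pi> j))) [0..<c])
         \<le> mu (card {i. i < c \<and> typeA (Q i)}) (card {i. i < c \<and> typeB (Q i)})"
proof -
  have "length (filter typeA (map (\<lambda>j. orient (f ! j) (Q (\<pi> j))) [0..<c]))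
      = card {i. i < c \<and> typeA (Q i)}"
    by (rule length_filter_arrangement[OF assms(1)]) (simp add: assms(2) typeA_orient)
  moreover have "length (filter typeB (map (\<lambda>j. orient (f ! j) (Q (\<pi> j))) [0..<c]))
      = card {i. i < c \<and> typeB (Q i)}"
    by (rule length_filter_arrangement[OF assms(1)]) (simp add: assms(2) typeB_orient)
  ultimately show ?thesis
    using merge_count_le_mu by metis
qed

subsection \<open>An optimal arrangement\<close>

definition arrange :: "(nat \<Rightarrow> 'a set list) \<Rightarrow> (nat \<times> bool) list \<Rightarrow> 'a set list list" where
  "arrange Q arr = map (\<lambda>(i, fl). orient fl (Q i)) arr"

lemma arrange_append: "arrange Q (xs @ ys) = arrange Q xs @ arrange Q ys"
  by (simp add: arrange_def)

lemma arrange_unflipped [simp]: "arrange Q (map (\<lambda>i. (i, False)) xs) = map Q xs"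
  by (simp add: arrange_def orient_def)

lemma arrangement_permutation:
  assumes "mset (map fst arr) = mset [0..<c]"
  obtains \<pi> f where "\<pi> permutes {0..<c}" "length f = c"
    "map (\<lambda>j. orient (f ! j) (Q (\<pi> j))) [0..<c] = arrange Q arr"
proof -
  obtain p where p: "p permutes {..<c}" "permute_list p [0..<c] = map fst arr"
    using mset_eq_permutation[OF assms] by auto
  have len: "length arr = c"
    using mset_eq_length[OF assms] by simp
  have "fst (arr ! j) = p j" if "j < c" for j
  proof -
    have "fst (arr ! j) = permute_list p [0..<c] ! j"
      using p(2) len that by simp
    also have "\<dots> = p j"
      using permute_list_nth[of p "[0..<c]" j] permutes_in_image[OF p(1)] p(1) that by simp
    finally show ?thesis .
  qed
  then have "map (\<lambda>j. orient (map snd arr ! j) (Q (p j))) [0..<c] = arrange Q arr"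
    using len by (intro nth_equalityI) (simp_all add: arrange_def case_prod_beta)
  with p len show ?thesis
    using that[of p "map snd arr"] by (simp add: atLeast0LessThan)
qed

text \<open>\<open>zigzag Q d xs\<close> orients the Type B pieces \<open>Q x\<close> so that they alternately start with a
  small bag and end with one, starting with a small bag iff \<open>d\<close>.\<close>

fun zigzag :: "(nat \<Rightarrow> 'a set list) \<Rightarrow> bool \<Rightarrow> nat list \<Rightarrow> (nat \<times> bool) list" where
  "zigzag Q d [] = []"
| "zigzag Q d (x # xs) =
     (x, if d then small_last (Q x) else small_hd (Q x)) # zigzag Q (\<not> d) xs"

lemma map_fst_zigzag [simp]: "map fst (zigzag Q d xs) = xs"
  by (induction xs arbitrary: d) auto

lemma merge_count_zigzag:
  assumes "\<forall>x\<in>set xs. Q x \<noteq> [] \<and> typeB (Q x)"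
  shows "merge_count d (arrange Q (zigzag Q d xs))
         = (if d then (length xs + 1) div 2 else length xs div 2)"
  using assms
proof (induction xs arbitrary: d)
  case (Cons x xs)
  then have "small_hd (orient (if d then small_last (Q x) else small_hd (Q x)) (Q x)) = d"
    and "small_last (orient (if d then small_last (Q x) else small_hd (Q x)) (Q x)) = (\<not> d)"
    by (auto simp: small_hd_orient small_last_orient typeB_iff)
  with Cons show ?case by (simp add: arrange_def)
qed (simp add: arrange_def)

lemma merge_count_typeA:
  "\<forall>P\<in>set Ps. typeA P \<Longrightarrow> merge_count e Ps = of_bool e + length Ps - 1"
  by (induction Ps arbitrary: e) (auto simp: typeA_iff)

lemma ends_small_after_typeA:
  "\<forall>P\<in>set Ps. typeA P \<Longrightarrow> ends_small_after e Ps \<longleftrightarrow> e \<or> Ps \<noteq> []"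
  by (simp add: ends_small_after_def typeA_iff)

lemma merge_count_not_small_hd:
  "\<forall>P\<in>set Ps. \<not> small_hd P \<Longrightarrow> merge_count e Ps = 0"
  by (induction Ps arbitrary: e) auto

lemma merge_count_arrangement_without_typeB:
  assumes "\<forall>x\<in>set as. typeA (Q x)" "\<forall>x\<in>set cs. \<not> small_hd (Q x)"
  shows "merge_count False (map Q as @ map Q cs) = length as - 1"
  using assms by (simp add: merge_count_append merge_count_typeA merge_count_not_small_hd)

lemma merge_count_arrangement_with_typeB:
  assumes "Q b \<noteq> []" "typeB (Q b)" "\<forall>x\<in>set as. typeA (Q x)"
    "\<forall>x\<in>set bs. Q x \<noteq> [] \<and> typeB (Q x)" "\<forall>x\<in>set cs. \<not> small_hd (Q x)"
  shows "merge_count False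
           (arrange Q [(b, small_hd (Q b))] @ map Q as @ arrange Q (zigzag Q True bs) @ map Q cs)
         = length as + (length bs + 1) div 2"
proof -
  have "small_last (orient (small_hd (Q b)) (Q b))"
    using assms(1,2) by (auto simp: small_last_orient typeB_iff)
  then have "merge_count False (arrange Q [(b, small_hd (Q b))]) = 0"
    and "ends_small_after False (arrange Q [(b, small_hd (Q b))])"
    by (simp_all add: arrange_def ends_small_after_def)
  moreover have "merge_count True (map Q as) = length as" "ends_small_after True (map Q as)"
    using assms(3) by (simp_all add: merge_count_typeA ends_small_after_typeA)
  moreover have "merge_count True (arrange Q (zigzag Q True bs)) = (length bs + 1) div 2"
    using merge_count_zigzag[OF assms(4)] by simp
  moreover have "merge_count e (map Q cs) = 0" for e
    using assms(5) by (simp add: merge_count_not_small_hd)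
  ultimately show ?thesis by (simp add: merge_count_append)
qed

lemma card_filter_upt: "card {i. i < c \<and> P i} = length (filter P [0..<c])"
proof -
  have "{i. i < c \<and> P i} = set (filter P [0..<c])" by auto
  then show ?thesis using distinct_card[of "filter P [0..<c]"] by simp
qed

lemma optimal_arrangement_exists:
  assumes "\<forall>i<c. Q i \<noteq> []"
  obtains arr where "mset (map fst arr) = mset [0..<c]"
    "merge_count False (arrange Q arr)
     = mu (card {i. i < c \<and> typeA (Q i)}) (card {i. i < c \<and> typeB (Q i)})"
proof -
  define as where "as = filter (\<lambda>i. typeA (Q i)) [0..<c]"
  define bs where "bs = filter (\<lambda>i. typeB (Q i)) [0..<c]"
  define cs where "cs = filter (\<lambda>i. \<not> small_hd (Q i) \<and> \<not> small_last (Q i)) [0..<c]"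
  have "mset (filter (\<lambda>i. typeA (Q i)) xs) + mset (filter (\<lambda>i. typeB (Q i)) xs)
        + mset (filter (\<lambda>i. \<not> small_hd (Q i) \<and> \<not> small_last (Q i)) xs) = mset xs" for xs
    by (induction xs) (auto simp: typeA_iff typeB_iff)
  then have partition: "mset as + mset bs + mset cs = mset [0..<c]"
    by (simp only: as_def bs_def cs_def)
  have As: "\<forall>x\<in>set as. typeA (Q x)" and Bs: "\<forall>x\<in>set bs. Q x \<noteq> [] \<and> typeB (Q x)"
    and Cs: "\<forall>x\<in>set cs. \<not> small_hd (Q x)"
    using assms by (auto simp: as_def bs_def cs_def)
  have counts: "card {i. i < c \<and> typeA (Q i)} = length as"
    "card {i. i < c \<and> typeB (Q i)} = length bs"
    by (simp_all add: as_def bs_def card_filter_upt)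
  show ?thesis
  proof (cases bs)
    case Nil
    let ?arr = "map (\<lambda>i. (i, False)) (as @ cs)"
    have "mset (map fst ?arr) = mset [0..<c]"
      using partition Nil by (simp add: comp_def)
    moreover have "merge_count False (arrange Q ?arr) = length as - 1"
      using merge_count_arrangement_without_typeB[OF As Cs] by (simp add: arrange_append)
    moreover have "mu (length as) (length bs) = length as - 1"
      using Nil by (simp add: mu_def)
    ultimately show ?thesis using that[of ?arr] unfolding counts by metis
  next
    case (Cons b rest)
    let ?arr = "[(b, small_hd (Q b))] @ map (\<lambda>i. (i, False)) as @ zigzag Q True rest
                @ map (\<lambda>i. (i, False)) cs"
    have "mset (map fst ?arr) = mset [0..<c]"
      using partition Cons by (simp add: comp_def ac_simps)
    moreover have "arrange Q ?arr
        = arrange Q [(b, small_hd (Q b))] @ map Q as @ arrange Q (zigzag Q True rest) @ map Q cs"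
      by (simp only: arrange_append arrange_unflipped)
    then have "merge_count False (arrange Q ?arr) = length as + length bs div 2"
      using merge_count_arrangement_with_typeB[of Q b as rest cs] As Bs Cs Cons by simp
    moreover have "mu (length as) (length bs) = length as + length bs div 2"
      using Cons by (simp add: mu_def)
    ultimately show ?thesis using that[of ?arr] unfolding counts by metis
  qed
qed

lemma length_concat_arrangement:
  assumes "\<pi> permutes {0..<c}" "\<forall>i<c. nondegenerate_pd (Q i)"
  shows "length (concat_pds (map (\<lambda>j. orient (f ! j) (Q (\<pi> j))) [0..<c]))
         + merge_count False (map (\<lambda>j. orient (f ! j) (Q (\<pi> j))) [0..<c])
         = (\<Sum>i<c. length (Q i))"
proof -
  have "\<forall>P\<in>set (map (\<lambda>j. orient (f ! j) (Q (\<pi> j))) [0..<c]). nondegenerate_pd P"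
    using assms permutes_in_image[OF assms(1)] by (auto intro: nondegenerate_pd_orient)
  moreover have "sum_list (map length (map (\<lambda>j. orient (f ! j) (Q (\<pi> j))) [0..<c]))
      = (\<Sum>i<c. length (Q i))"
    by (rule sum_list_arrangement[OF assms(1)]) simp
  ultimately show ?thesis
    by (simp only: length_concat_pds)
qed

theorem Min_length_concat_arrangements:
  assumes "\<forall>i<c. nondegenerate_pd (Q i)"
  shows "Min {length (concat_pds (map (\<lambda>j. orient (f ! j) (Q (\<pi> j))) [0..<c])) |
                \<pi> f. \<pi> permutes {0..<c} \<and> length f = c}
         + mu (card {i. i < c \<and> typeA (Q i)}) (card {i. i < c \<and> typeB (Q i)})
         = (\<Sum>i<c. length (Q i))"
    (is "Min ?S + ?m = ?T")
proof -
  have nonempty: "\<forall>i<c. Q i \<noteq> []"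
    using assms by (simp add: nondegenerate_pd_def)
  have bounds: "?T \<le> y + ?m \<and> y \<le> ?T" if "y \<in> ?S" for y
  proof -
    from that obtain \<pi> f where \<pi>: "\<pi> permutes {0..<c}"
      and y: "y = length (concat_pds (map (\<lambda>j. orient (f ! j) (Q (\<pi> j))) [0..<c]))"
      by blast
    show ?thesis
      using merge_count_arrangement_le[OF \<pi> nonempty, of f] length_concat_arrangement[OF \<pi> assms, of f]
      unfolding y by linarith
  qed
  obtain arr where arr: "mset (map fst arr) = mset [0..<c]"
      "merge_count False (arrange Q arr) = ?m"
    using optimal_arrangement_exists[OF nonempty] by blast
  obtain \<pi> f where \<pi>: "\<pi> permutes {0..<c}" "length f = c"
      and eq: "map (\<lambda>j. orient (f ! j) (Q (\<pi> j))) [0..<c] = arrange Q arr"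
    using arrangement_permutation[OF arr(1)] by blast
  have "?S \<subseteq> {..?T}"
    using bounds by (intro subsetI) simp
  then have "finite ?S"
    using finite_subset by blast
  moreover have optimal: "length (concat_pds (arrange Q arr)) + ?m = ?T"
    using length_concat_arrangement[OF \<pi>(1) assms, of f] arr(2) unfolding eq by simp
  then have "length (concat_pds (arrange Q arr)) \<le> y" if "y \<in> ?S" for y
    using bounds[OF that] by linarith
  moreover have "length (concat_pds (arrange Q arr)) \<in> ?S"
    using \<pi> unfolding eq[symmetric] by blast
  ultimately have "Min ?S = length (concat_pds (arrange Q arr))"
    by (rule Min_eqI)
  with optimal show ?thesis by simp
qed

lemma component_subset: "is_component V E S \<Longrightarrow> S \<subseteq> V"
  by (auto simp: is_component_def reach_def elim: rtranclp.cases)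

lemma nondegenerate_pd_if_chunk_graph:
  assumes "finite V" "chunk_graph V E" "is_path_decomp V E P"
  shows "nondegenerate_pd P"
proof -
  obtain S where "big_component V E S"
    using assms(2) unfolding chunk_graph_def by blast
  then have "S \<subseteq> V" "card S \<ge> 3"
    using component_subset[of V E S] by (simp_all add: big_component_def)
  then have "card V \<ge> 3"
    using card_mono[OF assms(1) \<open>S \<subseteq> V\<close>] by linarith
  moreover have union: "\<Union>(set P) = V"
    using assms(3) by (simp add: is_path_decomp_def)
  ultimately have "P \<noteq> []"
    by auto
  moreover have "\<not> small_hd P" if "length P = 1"
  proof -
    obtain X where "P = [X]"
      using \<open>length P = 1\<close> by (cases P) auto
    with union \<open>card V \<ge> 3\<close> show ?thesis
      by (simp add: small_hd_def)
  qed
  ultimately show ?thesis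
    by (simp add: nondegenerate_pd_def)
qed

theorem mainTheorem20:
  fixes V :: "'a set" and E :: "'a set set" and c :: nat
    and Vs :: "nat \<Rightarrow> 'a set" and Q :: "nat \<Rightarrow> 'a set list"
  assumes G: "graph V E"
    and pw: "pathwidth V E = 3"
    and disj: "\<forall>i<c. \<forall>j<c. i \<noteq> j \<longrightarrow> Vs i \<inter> Vs j = {}"
    and cover: "(\<Union>i<c. Vs i) = V"
    and comps: "\<forall>e\<in>E. \<exists>i<c. e \<subseteq> Vs i"
    and chunks: "\<forall>i<c. chunk_graph (Vs i) {e\<in>E. e \<subseteq> Vs i}"
    and pds: "\<forall>i<c. is_path_decomp (Vs i) {e\<in>E. e \<subseteq> Vs i} (Q i) \<and> pd_width (Q i) \<le> 3"
  shows "int (Min {length (concat_pds (map (\<lambda>j. orient (f ! j) (Q (\<pi> j))) [0..<c])) |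
                   \<pi> f. \<pi> permutes {0..<c} \<and> length f = c})
         = (\<Sum>i<c. int (length (Q i)))
           - int (mu (card {i. i < c \<and> typeA (Q i)}) (card {i. i < c \<and> typeB (Q i)}))"
proof -
  \<comment> \<open>Only the big component of each chunk matters; width, pathwidth and disjointness do not.\<close>
  have "finite (Vs i)" if "i < c" for i
    using G cover that unfolding graph_def by (metis UN_upper finite_subset lessThan_iff)
  then have "\<forall>i<c. nondegenerate_pd (Q i)"
    using chunks pds nondegenerate_pd_if_chunk_graph by blast
  from Min_length_concat_arrangements[OF this] show ?thesis
    by (simp flip: of_nat_sum add: algebra_simps)
qed

end
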